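(* For all real $a\geq1$ and $\lambda\geq1$, $$\frac{c(\lambda a)}{\lambda a}\leq\frac{c(a)}{a}.$$
   Context: $c(a):=\inf\{A>0: E(1,a)\text{ symplectically embeds into } C(A)\}$ for real $a\geq1$, where $E(1,a)=\{\pi(x_1^2+y_1^2)+\pi(x_2^2+y_2^2)/a<1\}\subset\mathbb{R}^4$ with the standard symplectic form, and $C(A)=D^2(A)\times D^2(A)$ with $D^2(A)$ the open disc of area $A$. *)

theory Defs
  imports "HOL-Analysis.Analysis"
begin

text \<open>Coordinates on R^4 = real^4: z = (x1, y1, x2, y2) = (z$1, z$2, z$3, z$4).\<close>

definition omega4 :: "real^4 \<Rightarrow> real^4 \<Rightarrow> real" where
  "omega4 u v = u$1 * v$2 - u$2 * v$1 + u$3 * v$4 - u$4 * v$3"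

definition ellipsoid :: "real \<Rightarrow> (real^4) set" where
  "ellipsoid a = {z. pi * ((z$1)^2 + (z$2)^2) + pi * ((z$3)^2 + (z$4)^2) / a < 1}"

definition polydisk :: "real \<Rightarrow> (real^4) set" where
  "polydisk A = {z. pi * ((z$1)^2 + (z$2)^2) < A \<and> pi * ((z$3)^2 + (z$4)^2) < A}"

primrec Ck_on :: "nat \<Rightarrow> 'a::euclidean_space set \<Rightarrow> ('a \<Rightarrow> 'b::real_normed_vector) \<Rightarrow> bool" where
  "Ck_on 0 U f = continuous_on U f"
| "Ck_on (Suc k) U f = (\<exists>f'. (\<forall>x\<in>U. (f has_derivative f' x) (at x)) \<and>
                              (\<forall>b\<in>Basis. Ck_on k U (\<lambda>x. f' x b)))"

definition smooth_on :: "'a::euclidean_space set \<Rightarrow> ('a \<Rightarrow> 'b::real_normed_vector) \<Rightarrow> bool" where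
  "smooth_on U f = (\<forall>k. Ck_on k U f)"

definition symplectic_embedding :: "(real^4 \<Rightarrow> real^4) \<Rightarrow> (real^4) set \<Rightarrow> (real^4) set \<Rightarrow> bool" where
  "symplectic_embedding \<phi> U V =
     (smooth_on U \<phi> \<and> inj_on \<phi> U \<and> continuous_on (\<phi> ` U) (inv_into U \<phi>) \<and> \<phi> ` U \<subseteq> V \<and>
      (\<forall>x\<in>U. \<exists>D. (\<phi> has_derivative D) (at x) \<and> (\<forall>u v. omega4 (D u) (D v) = omega4 u v)))"

definition cap :: "real \<Rightarrow> real" where
  "cap a = Inf {A::real. 0 < A \<and> (\<exists>\<phi>. symplectic_embedding \<phi> (ellipsoid a) (polydisk A))}"

end

theory Submission
  imports Defs
begin

text \<open>Conjugating an embedding by the dilation by \<open>s\<close> multiplies the symplectic form by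
  \<open>s\<^sup>2 / s\<^sup>2 = 1\<close>, so it turns an embedding \<open>E(1,a) \<rightarrow> C(A)\<close> into an embedding of
  \<open>\<surd>\<lambda> E(1,a) \<supseteq> E(1,\<lambda>a)\<close> into \<open>\<surd>\<lambda> C(A) = C(\<lambda>A)\<close>. Hence \<open>c(\<lambda>a) \<le> \<lambda> c(a)\<close>.\<close>

lemma Ck_on_const: "Ck_on k U (\<lambda>x. c)"
proof (induction k arbitrary: c)
  case 0
  then show ?case by simp
next
  case (Suc k)
  show ?case
    by (simp, rule exI[of _ "\<lambda>x h. 0"]) (auto intro: Suc)
qed

lemma Ck_on_id: "Ck_on k U (\<lambda>x. x)"
proof (cases k)
  case 0
  then show ?thesis by (simp add: continuous_on_id)
next
  case (Suc m)
  show ?thesis unfolding Suc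
    by (simp, rule exI[of _ "\<lambda>x h. h"]) (auto intro: Ck_on_const)
qed

lemma Ck_on_subset: "Ck_on k U f \<Longrightarrow> V \<subseteq> U \<Longrightarrow> Ck_on k V f"
proof (induction k arbitrary: f)
  case 0
  then show ?case by (auto intro: continuous_on_subset)
next
  case (Suc k)
  then obtain f' where "\<forall>x\<in>U. (f has_derivative f' x) (at x)"
    and "\<forall>b\<in>Basis. Ck_on k U (\<lambda>x. f' x b)" by auto
  with Suc.IH Suc.prems(2) show ?case by (auto intro!: exI[of _ f'])
qed

lemma Ck_on_scaleR_comp_scaleR:
  fixes f :: "'a::euclidean_space \<Rightarrow> 'b::real_normed_vector"
  assumes "Ck_on k U f" and "\<And>x. x \<in> V \<Longrightarrow> t *\<^sub>R x \<in> U"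
  shows "Ck_on k V (\<lambda>x. c *\<^sub>R f (t *\<^sub>R x))"
  using assms
proof (induction k arbitrary: f c)
  case 0
  have "continuous_on V (f \<circ> (\<lambda>x. t *\<^sub>R x))"
    by (rule continuous_on_compose) (use 0 in \<open>auto intro!: continuous_intros
        intro: continuous_on_subset\<close>)
  then show ?case by (auto simp: o_def intro!: continuous_intros)
next
  case (Suc k)
  from Suc.prems obtain f' where deriv: "\<forall>x\<in>U. (f has_derivative f' x) (at x)"
    and partials: "\<forall>b\<in>Basis. Ck_on k U (\<lambda>x. f' x b)" by auto
  show ?case
  proof (simp, intro exI[of _ "\<lambda>x h. (c * t) *\<^sub>R f' (t *\<^sub>R x) h"] conjI ballI)
    fix x assume "x \<in> V"
    then have fd: "(f has_derivative f' (t *\<^sub>R x)) (at (t *\<^sub>R x))"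
      using deriv Suc.prems(2) by auto
    have "((\<lambda>x. t *\<^sub>R x) has_derivative (\<lambda>h. t *\<^sub>R h)) (at x)"
      by (intro derivative_eq_intros) auto
    from has_derivative_compose[OF this fd]
    have "((\<lambda>x. c *\<^sub>R f (t *\<^sub>R x)) has_derivative (\<lambda>h. c *\<^sub>R f' (t *\<^sub>R x) (t *\<^sub>R h))) (at x)"
      by (intro derivative_intros) (simp add: o_def)
    then show "((\<lambda>x. c *\<^sub>R f (t *\<^sub>R x)) has_derivative (\<lambda>h. (c * t) *\<^sub>R f' (t *\<^sub>R x) h)) (at x)"
      using has_derivative_linear[OF fd] by (simp add: linear_cmul)
  next
    fix b :: 'a assume "b \<in> Basis"
    then show "Ck_on k V (\<lambda>x. (c * t) *\<^sub>R f' (t *\<^sub>R x) b)"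
      using Suc.IH partials Suc.prems(2) by blast
  qed
qed

lemma omega4_scaleR: "omega4 (c *\<^sub>R u) (c *\<^sub>R v) = c\<^sup>2 * omega4 u v"
  by (simp add: omega4_def power2_eq_square algebra_simps)

lemma symplectic_embedding_id: "symplectic_embedding (\<lambda>x. x) U U"
proof -
  have "continuous_on U (inv_into U (\<lambda>x. x))"
    using continuous_on_id continuous_on_cong by (metis inv_into_f_eq inj_on_id2 id_apply)
  then show ?thesis unfolding symplectic_embedding_def smooth_on_def
    using Ck_on_id by (auto intro!: exI[of _ "\<lambda>h. h"] has_derivative_ident)
qed

lemma symplectic_embedding_mono:
  assumes "symplectic_embedding \<phi> U V" and "W \<subseteq> U" and "V \<subseteq> V'"
  shows "symplectic_embedding \<phi> W V'"
proof -
  from assms(1) have inj: "inj_on \<phi> U"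
    and inv_cont: "continuous_on (\<phi> ` U) (inv_into U \<phi>)" unfolding symplectic_embedding_def by auto
  have "inv_into W \<phi> y = inv_into U \<phi> y" if "y \<in> \<phi> ` W" for y
    using that assms(2) inj by (auto simp: inj_on_subset subsetD)
  then have "continuous_on (\<phi> ` W) (inv_into W \<phi>)"
    using continuous_on_subset[OF inv_cont] assms(2) continuous_on_cong
    by (metis (no_types, lifting) image_mono)
  with assms show ?thesis
    unfolding symplectic_embedding_def smooth_on_def
    by (auto intro: Ck_on_subset inj_on_subset) blast
qed

lemma symplectic_embedding_rescale:
  fixes s :: real
  assumes "s \<noteq> 0" and emb: "symplectic_embedding \<phi> U V"
  shows "symplectic_embedding (\<lambda>x. s *\<^sub>R \<phi> (x /\<^sub>R s)) ((*\<^sub>R) s ` U) ((*\<^sub>R) s ` V)"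
proof -
  define \<psi> where "\<psi> = (\<lambda>x. s *\<^sub>R \<phi> (x /\<^sub>R s))"
  let ?U = "(*\<^sub>R) s ` U"
  have mem: "x /\<^sub>R s \<in> U" if "x \<in> ?U" for x
    using that assms(1) by auto
  from emb have smooth: "smooth_on U \<phi>" and inj: "inj_on \<phi> U"
    and inv_cont: "continuous_on (\<phi> ` U) (inv_into U \<phi>)" and image: "\<phi> ` U \<subseteq> V"
    and symp: "\<forall>x\<in>U. \<exists>D. (\<phi> has_derivative D) (at x) \<and> (\<forall>u v. omega4 (D u) (D v) = omega4 u v)"
    unfolding symplectic_embedding_def by auto
  have "smooth_on ?U \<psi>"
    using smooth mem unfolding smooth_on_def \<psi>_def by (blast intro: Ck_on_scaleR_comp_scaleR)
  moreover have inj_\<psi>: "inj_on \<psi> ?U"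
    using inj assms(1) unfolding \<psi>_def by (auto simp: inj_on_def)
  moreover have "continuous_on (\<psi> ` ?U) (inv_into ?U \<psi>)"
  proof -
    have inv_eq: "inv_into ?U \<psi> y = s *\<^sub>R inv_into U \<phi> (y /\<^sub>R s)" if "y \<in> \<psi> ` ?U" for y
    proof -
      obtain x where x: "x \<in> U" and y: "y = \<psi> (s *\<^sub>R x)" using \<open>y \<in> \<psi> ` ?U\<close> by auto
      have "y /\<^sub>R s = \<phi> x" using y assms(1) by (simp add: \<psi>_def)
      moreover have "s *\<^sub>R x \<in> ?U" using x by blast
      ultimately show ?thesis using inj_\<psi> inj x y by simp
    qed
    have "(\<lambda>y. y /\<^sub>R s) ` \<psi> ` ?U \<subseteq> \<phi> ` U"
      using assms(1) by (auto simp: \<psi>_def)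
    then have "continuous_on (\<psi> ` ?U) (inv_into U \<phi> \<circ> (\<lambda>y. y /\<^sub>R s))"
      by (intro continuous_on_compose continuous_intros) (rule continuous_on_subset[OF inv_cont])
    then have "continuous_on (\<psi> ` ?U) (\<lambda>y. s *\<^sub>R inv_into U \<phi> (y /\<^sub>R s))"
      by (auto simp: o_def intro!: continuous_intros)
    then show ?thesis using inv_eq continuous_on_cong by (metis (no_types, lifting))
  qed
  moreover have "\<psi> ` ?U \<subseteq> (*\<^sub>R) s ` V"
    using image assms(1) by (auto simp: \<psi>_def)
  moreover have "\<exists>D. (\<psi> has_derivative D) (at x) \<and> (\<forall>u v. omega4 (D u) (D v) = omega4 u v)"
    if x: "x \<in> ?U" for x
  proof -
    obtain D where D: "(\<phi> has_derivative D) (at (x /\<^sub>R s))"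
      and D_symp: "\<forall>u v. omega4 (D u) (D v) = omega4 u v" using symp mem[OF x] by blast
    have "((\<lambda>x. x /\<^sub>R s) has_derivative (\<lambda>h. h /\<^sub>R s)) (at x)"
      by (intro derivative_eq_intros) auto
    from has_derivative_compose[OF this D]
    have "(\<psi> has_derivative (\<lambda>h. s *\<^sub>R D (h /\<^sub>R s))) (at x)"
      unfolding \<psi>_def by (intro derivative_intros) (simp add: o_def)
    moreover have "omega4 (s *\<^sub>R D (u /\<^sub>R s)) (s *\<^sub>R D (v /\<^sub>R s)) = omega4 u v" for u v
    proof -
      have "omega4 (s *\<^sub>R D (u /\<^sub>R s)) (s *\<^sub>R D (v /\<^sub>R s)) = s\<^sup>2 * omega4 (u /\<^sub>R s) (v /\<^sub>R s)"
        using D_symp by (simp add: omega4_scaleR)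
      also have "\<dots> = omega4 u v"
        using assms(1) by (simp add: omega4_scaleR power_inverse)
      finally show ?thesis .
    qed
    ultimately show ?thesis by blast
  qed
  ultimately show ?thesis unfolding symplectic_embedding_def \<psi>_def by blast
qed

lemma ellipsoid_subset_polydisk: "a \<ge> 1 \<Longrightarrow> ellipsoid a \<subseteq> polydisk a"
proof
  fix z :: "real^4" assume "a \<ge> 1" and "z \<in> ellipsoid a"
  define P where "P = pi * ((z$1)\<^sup>2 + (z$2)\<^sup>2)"
  define Q where "Q = pi * ((z$3)\<^sup>2 + (z$4)\<^sup>2)"
  have "P + Q / a < 1" using \<open>z \<in> ellipsoid a\<close> unfolding ellipsoid_def P_def Q_def by simp
  moreover have "P \<ge> 0" "Q / a \<ge> 0" using \<open>a \<ge> 1\<close> by (simp_all add: P_def Q_def)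
  ultimately have "P < a" and "Q / a < 1" using \<open>a \<ge> 1\<close> by linarith+
  moreover from \<open>Q / a < 1\<close> have "Q < a" using \<open>a \<ge> 1\<close> by (simp add: divide_less_eq)
  ultimately show "z \<in> polydisk a" unfolding polydisk_def P_def Q_def by simp
qed

lemma ellipsoid_subset_scaleR_ellipsoid:
  assumes "l \<ge> 1" and "a > 0"
  shows "ellipsoid (l * a) \<subseteq> (*\<^sub>R) (sqrt l) ` ellipsoid a"
proof
  fix x :: "real^4" assume "x \<in> ellipsoid (l * a)"
  define P where "P = pi * ((x$1)\<^sup>2 + (x$2)\<^sup>2)"
  define Q where "Q = pi * ((x$3)\<^sup>2 + (x$4)\<^sup>2)"
  have "P \<ge> 0" by (simp add: P_def)
  have "(inverse (sqrt l))\<^sup>2 = 1 / l" using assms by (simp add: power_inverse divide_inverse)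
  then have "pi * (((x /\<^sub>R sqrt l)$1)\<^sup>2 + ((x /\<^sub>R sqrt l)$2)\<^sup>2)
      + pi * (((x /\<^sub>R sqrt l)$3)\<^sup>2 + ((x /\<^sub>R sqrt l)$4)\<^sup>2) / a = P / l + Q / (l * a)"
    using assms unfolding P_def Q_def by (simp add: power_mult_distrib field_simps)
  moreover have "P + Q / (l * a) < 1"
    using \<open>x \<in> ellipsoid (l * a)\<close> unfolding ellipsoid_def P_def Q_def by simp
  moreover have "P / l \<le> P"
    using assms \<open>P \<ge> 0\<close> by (simp add: divide_le_eq mult_le_cancel_left1)
  ultimately have "x /\<^sub>R sqrt l \<in> ellipsoid a" unfolding ellipsoid_def by simp
  moreover have "x = sqrt l *\<^sub>R (x /\<^sub>R sqrt l)" using assms by simp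
  ultimately show "x \<in> (*\<^sub>R) (sqrt l) ` ellipsoid a" by blast
qed

lemma scaleR_polydisk_subset:
  assumes "s \<noteq> 0"
  shows "(*\<^sub>R) s ` polydisk A \<subseteq> polydisk (s\<^sup>2 * A)"
proof
  have scaled: "pi * ((s * u)\<^sup>2 + (s * v)\<^sup>2) < s\<^sup>2 * A" if "pi * (u\<^sup>2 + v\<^sup>2) < A" for u v
  proof -
    have "s\<^sup>2 * (pi * (u\<^sup>2 + v\<^sup>2)) < s\<^sup>2 * A" using that assms by simp
    then show ?thesis by (simp add: power_mult_distrib algebra_simps)
  qed
  fix y assume "y \<in> (*\<^sub>R) s ` polydisk A"
  then obtain w where "w \<in> polydisk A" and "y = s *\<^sub>R w" by auto
  then show "y \<in> polydisk (s\<^sup>2 * A)" unfolding polydisk_def by (simp add: scaled)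
qed

lemma cap_le:
  assumes "A > 0" and "symplectic_embedding \<phi> (ellipsoid a) (polydisk A)"
  shows "cap a \<le> A"
  unfolding cap_def using assms by (intro cInf_lower bdd_belowI[of _ 0]) auto

lemma cap_mult_le:
  assumes "a \<ge> 1" and "l \<ge> 1"
  shows "cap (l * a) \<le> l * cap a"
proof -
  have "symplectic_embedding (\<lambda>x. x) (ellipsoid a) (polydisk a)"
    using symplectic_embedding_id ellipsoid_subset_polydisk[OF assms(1)]
    by (rule symplectic_embedding_mono[OF _ order.refl])
  then have nonempty: "{A. 0 < A \<and> (\<exists>\<phi>. symplectic_embedding \<phi> (ellipsoid a) (polydisk A))} \<noteq> {}"
    using assms(1) by (intro ex_in_conv[THEN iffD1] exI[of _ a]) auto
  have "cap (l * a) / l \<le> A"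
    if "A > 0" and emb: "symplectic_embedding \<phi> (ellipsoid a) (polydisk A)" for A \<phi>
  proof -
    have "sqrt l \<noteq> 0" using assms(2) by simp
    from symplectic_embedding_rescale[OF this emb]
    have "symplectic_embedding (\<lambda>x. sqrt l *\<^sub>R \<phi> (x /\<^sub>R sqrt l)) (ellipsoid (l * a)) (polydisk (l * A))"
    proof (rule symplectic_embedding_mono)
      show "ellipsoid (l * a) \<subseteq> (*\<^sub>R) (sqrt l) ` ellipsoid a"
        using assms by (intro ellipsoid_subset_scaleR_ellipsoid) auto
      show "(*\<^sub>R) (sqrt l) ` polydisk A \<subseteq> polydisk (l * A)"
        using scaleR_polydisk_subset[OF \<open>sqrt l \<noteq> 0\<close>, of A] assms(2) by simp
    qed
    then have "cap (l * a) \<le> l * A"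
      using \<open>A > 0\<close> assms(2) by (intro cap_le) auto
    then show ?thesis using assms(2) by (simp add: divide_le_eq mult.commute)
  qed
  then have "cap (l * a) / l \<le> cap a"
    unfolding cap_def[of a] using nonempty by (intro cInf_greatest) auto
  then show ?thesis using assms(2) by (simp add: divide_le_eq mult.commute)
qed

theorem lemma4p2:
  fixes a l :: real
  assumes "a \<ge> 1" and "l \<ge> 1"
  shows "cap (l * a) / (l * a) \<le> cap a / a"
proof -
  have "cap (l * a) / (l * a) \<le> l * cap a / (l * a)"
    using cap_mult_le[OF assms] assms by (intro divide_right_mono) auto
  also have "\<dots> = cap a / a" using assms(2) by simp
  finally show ?thesis .
qed

end
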